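(* Under the standing assumptions below: (i) if $f\in S_2$ then $\theta(f)$ is invertible with $\|\theta(f)^{-1}\|_{HS}<1.5$, and if $e\in S_0$ then $I-\theta(e)$ is invertible with $\|(I-\theta(e))^{-1}\|_{HS}<1.5$; (ii) if $e,f\in S_2$ then $ef\in S_2$; (iii) if $e\in S_0$ and $f\in S$ then $ef\in S_0$. In particular $S_2\cup S_0$ is a subsemigroup of $S$, and the map $\phi:S_2\cup S_0\to M_2(\mathbb C)$ with $\phi\equiv I$ on $S_2$ and $\phi\equiv0$ on $S_0$ is multiplicative.
   Context: Standing assumptions: $S$ is a semilattice (commutative semigroup of idempotents), $0\le\delta<0.03$, and $\theta:S\to M_2(\mathbb C)$ satisfies $\|\theta(e)\theta(f)-\theta(ef)\|_{HS}\le\delta$ for all $e,f\in S$, where $\|A\|_{HS}=(\operatorname{tr}(A^*A))^{1/2}$. For $k\in\{0,1,2\}$, $S_k=\{x\in S:\ |\operatorname{tr}\theta(x)-k|<0.95\}$; these sets are pairwise disjoint and cover $S$. *)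

theory Defs
  imports "HOL-Analysis.Analysis"
begin

definition hs_norm :: "complex^2^2 \<Rightarrow> real" where
  "hs_norm A = sqrt (\<Sum>i\<in>UNIV. \<Sum>j\<in>UNIV. (cmod (A $ i $ j))\<^sup>2)"

definition mtrace :: "complex^2^2 \<Rightarrow> complex" where
  "mtrace A = (\<Sum>i\<in>UNIV. A $ i $ i)"

definition Sk :: "('a \<Rightarrow> complex^2^2) \<Rightarrow> nat \<Rightarrow> 'a set" where
  "Sk \<theta> k = {x. cmod (mtrace (\<theta> x) - of_nat k) < 0.95}"

end

theory Submission
  imports Defs
begin

(* For a 2x2 complex matrix A write t = tr A and split A = (t/2) I + A0 into its scalar and
   traceless parts.  The Hilbert-Schmidt norm splits orthogonally, |A|^2 = |t|^2/2 + |A0|^2,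
   and everything about a near-idempotent A is governed by the three numbers t, |A0|^2 and the
   discriminant D = t^2 - 4 det A (which satisfies |D| <= 2 |A0|^2):
     |A^2 - A|^2 = |(t^2 - 2t + D)/2|^2 / 2 + |t - 1|^2 |A0|^2.
   A purely scalar estimate then shows: if |A^2 - A| < 0.03 and |t - 2| < 0.95, then A is within
   1/20 of the identity and |A^-1| = |A| / |det A| < 3/2.  Applied to I - A this also treats
   near-idempotents with trace near 0.
   The file first develops the 2x2 matrix identities, then the scalar estimate, then the
   "rigidity" of near-idempotents and two perturbation lemmas about traces of products; finally,
   for a semilattice S with a 0.03-multiplicative map theta, these give invertibility on S_2 and
   S_0, closure of S_2 under products, the ideal property of S_0, and hence the theorem. *)

type_synonym cm = "complex^2^2"

lemma hs_norm_eq_norm: "hs_norm (A::cm) = norm A"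
  unfolding hs_norm_def norm_vec_def L2_set_def by (simp add: sum_nonneg)

lemma norm_sq_entries:
  "norm (A::cm)^2 = cmod (A$1$1)^2 + cmod (A$1$2)^2 + cmod (A$2$1)^2 + cmod (A$2$2)^2"
  unfolding hs_norm_eq_norm[symmetric] hs_norm_def by (simp add: sum_2 sum_nonneg)

lemma mtrace_2x2: "mtrace (A::cm) = A$1$1 + A$2$2"
  unfolding mtrace_def by (simp add: sum_2)

lemma matrix_mult_2x2: "((A::cm) ** B)$i$j = A$i$1 * B$1$j + A$i$2 * B$2$j"
  by (simp add: matrix_matrix_mult_def sum_2)

lemma mat_2x2 [simp]:
  "(mat c :: cm)$1$1 = c" "(mat c :: cm)$2$2 = c" "(mat c :: cm)$1$2 = 0" "(mat c :: cm)$2$1 = 0"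
  by (simp_all add: mat_def)

lemma matrix_diff_ldistrib: "(A::'a::ring_1^'n^'m) ** (B - C) = A ** B - A ** C"
  by (simp add: matrix_matrix_mult_def vec_eq_iff sum_subtractf right_diff_distrib)

lemma matrix_diff_rdistrib: "((A::'a::ring_1^'n^'m) - B) ** C = A ** C - B ** C"
  by (simp add: matrix_matrix_mult_def vec_eq_iff sum_subtractf left_diff_distrib)

lemma cmod_sum_sq_le:
  "cmod (x*y + z*w)^2 \<le> (cmod x^2 + cmod z^2) * (cmod y^2 + cmod w^2)"
proof -
  have "cmod (x*y + z*w) \<le> cmod x * cmod y + cmod z * cmod w"
    using norm_triangle_ineq[of "x*y" "z*w"] by (simp add: norm_mult)
  hence "cmod (x*y + z*w)^2 \<le> (cmod x * cmod y + cmod z * cmod w)^2"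
    by (intro power_mono) auto
  also have "\<dots> \<le> (cmod x^2 + cmod z^2) * (cmod y^2 + cmod w^2)"
    using zero_le_power2[of "cmod x * cmod w - cmod z * cmod y"]
    by (simp add: power2_eq_square algebra_simps)
  finally show ?thesis .
qed

lemma norm_matrix_mult_le: "norm ((A::cm) ** (B::cm)) \<le> norm A * norm B"
proof -
  have "norm (A ** B)^2 \<le> (norm A * norm B)^2"
    unfolding power_mult_distrib norm_sq_entries matrix_mult_2x2
    using cmod_sum_sq_le[of "A$1$1" "B$1$1" "A$1$2" "B$2$1"]
      cmod_sum_sq_le[of "A$1$1" "B$1$2" "A$1$2" "B$2$2"]
      cmod_sum_sq_le[of "A$2$1" "B$1$1" "A$2$2" "B$2$1"]
      cmod_sum_sq_le[of "A$2$1" "B$1$2" "A$2$2" "B$2$2"]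
    by (simp add: algebra_simps)
  thus ?thesis by (simp add: power2_le_iff_abs_le)
qed

text \<open>The squared norm of the traceless part of a matrix (its distance from the scalar
  matrices) and its discriminant, the square of the difference of the two eigenvalues.\<close>

definition scalar_dev :: "cm \<Rightarrow> real" where
  "scalar_dev A = cmod (A$1$1 - A$2$2)^2 / 2 + cmod (A$1$2)^2 + cmod (A$2$1)^2"

definition disc :: "cm \<Rightarrow> complex" where
  "disc A = (A$1$1 - A$2$2)^2 + 4 * A$1$2 * A$2$1"

lemma scalar_dev_nonneg: "0 \<le> scalar_dev A"
  unfolding scalar_dev_def by simp

lemma parallelogram_cmod: "cmod x^2 + cmod y^2 = (cmod (x + y)^2 + cmod (x - y)^2) / 2"
  unfolding cmod_power2 by (simp add: power2_eq_square algebra_simps)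

lemma norm_sq_trace_dev: "norm (A::cm)^2 = cmod (mtrace A)^2 / 2 + scalar_dev A"
  unfolding norm_sq_entries mtrace_2x2 scalar_dev_def
  using parallelogram_cmod[of "A$1$1" "A$2$2"] by simp

lemma trace_le_norm: "cmod (mtrace (A::cm)) \<le> 2 * norm A"
proof -
  have "cmod (mtrace A)^2 \<le> (2 * norm A)^2"
    using norm_sq_trace_dev[of A] scalar_dev_nonneg[of A] by (simp add: power_mult_distrib)
  thus ?thesis by (rule power2_le_imp_le) simp
qed

lemma disc_le_dev: "cmod (disc A) \<le> 2 * scalar_dev A"
proof -
  let ?x = "cmod (A$1$2)" and ?y = "cmod (A$2$1)"
  have "cmod (disc A) \<le> cmod (A$1$1 - A$2$2)^2 + 4 * ?x * ?y"
    unfolding disc_def using norm_triangle_ineq[of "(A$1$1 - A$2$2)^2" "4 * A$1$2 * A$2$1"]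
    by (simp add: norm_mult norm_power)
  also have "\<dots> \<le> 2 * scalar_dev A"
    using zero_le_power2[of "?x - ?y"] unfolding scalar_dev_def
    by (simp add: power2_diff algebra_simps)
  finally show ?thesis .
qed

text \<open>The idempotency defect A^2 - A: its traceless part is (tr A - 1) times that of A, and
  its trace is determined by tr A and disc A (Cayley-Hamilton).\<close>

lemma scalar_dev_idem_defect: "scalar_dev ((A::cm) ** A - A) = cmod (mtrace A - 1)^2 * scalar_dev A"
proof -
  have entries: "(A ** A - A)$1$1 - (A ** A - A)$2$2 = (mtrace A - 1) * (A$1$1 - A$2$2)"
    "(A ** A - A)$1$2 = (mtrace A - 1) * A$1$2" "(A ** A - A)$2$1 = (mtrace A - 1) * A$2$1"
    by (simp_all add: matrix_mult_2x2 mtrace_2x2 algebra_simps)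
  show ?thesis
    unfolding scalar_dev_def entries norm_mult power_mult_distrib by (simp add: algebra_simps)
qed

lemma trace_idem_defect: "mtrace ((A::cm) ** A - A) = (mtrace A^2 - 2 * mtrace A + disc A) / 2"
  by (simp add: mtrace_2x2 matrix_mult_2x2 disc_def power2_eq_square algebra_simps)

lemma det_trace_disc: "det (A::cm) = (mtrace A^2 - disc A) / 4"
  unfolding det_2 mtrace_2x2 disc_def by (simp add: power2_eq_square algebra_simps)

lemma scalar_dev_minus_mat [simp]: "scalar_dev (A - mat c) = scalar_dev A"
  unfolding scalar_dev_def by simp

lemma mtrace_minus_mat [simp]: "mtrace (A - mat c) = mtrace A - 2 * c"
  unfolding mtrace_2x2 by simp

lemma matrix_inv_right_inverse:
  fixes A B :: "'a::field^'n^'n"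
  assumes AB: "A ** B = mat 1"
  shows "invertible A \<and> matrix_inv A = B"
proof -
  have "B ** A = mat 1" using AB matrix_left_right_inverse by blast
  hence inv: "invertible A" using AB unfolding invertible_def by blast
  hence two_sided: "A ** matrix_inv A = mat 1 \<and> matrix_inv A ** A = mat 1"
    unfolding matrix_inv_def invertible_def by (rule someI_ex)
  have "matrix_inv A = matrix_inv A ** (A ** B)" using AB by simp
  also have "\<dots> = B" using two_sided by (simp add: matrix_mul_assoc)
  finally show ?thesis using inv by blast
qed

text \<open>The inverse of a 2x2 matrix is its adjugate divided by the determinant; since the
  adjugate has the same entries up to sign and position, the norms are related simply.\<close>

lemma inverse_2x2:
  fixes A :: cm
  assumes det: "det A \<noteq> 0"
  shows "invertible A \<and> norm (matrix_inv A) = norm A / cmod (det A)"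
proof -
  define B :: cm where "B = (\<chi> i j. (if i = j then A$(3-i)$(3-j) else - A$i$j) / det A)"
  have B: "B$1$1 = A$2$2 / det A" "B$1$2 = - A$1$2 / det A"
    "B$2$1 = - A$2$1 / det A" "B$2$2 = A$1$1 / det A"
    unfolding B_def by simp_all
  have "A ** B = mat 1"
    using det unfolding vec_eq_iff forall_2 matrix_mult_2x2 B det_2
    by (simp add: mult.commute diff_divide_distrib[symmetric] add_divide_distrib[symmetric])
  hence inv: "invertible A \<and> matrix_inv A = B" by (rule matrix_inv_right_inverse)
  have "norm B ^ 2 = (norm A / cmod (det A))^2"
    unfolding norm_sq_entries B norm_divide norm_minus_cancel power_divide add_divide_distrib
    by simp
  hence "norm B = norm A / cmod (det A)" by (simp add: power2_eq_iff_nonneg)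
  thus ?thesis using inv by simp
qed

text \<open>Here p = |t - 2|, S = |tr(A^2 - A)|, L = |disc A| and W = |t - 1|:
  the identity (t - 2) t = 2 tr(A^2 - A) - disc A bounds p (2 - p) from above by 2S + L, while
  the defect bound makes S and W^2 L small; together they force p to be small.\<close>

lemma trace_distance_small:
  fixes p S L W :: real
  assumes p: "0 \<le> p" "p < 19/20" and SL: "0 \<le> S" "0 \<le> L"
    and lower: "p * (2 - p) \<le> 2 * S + L"
    and upper: "S^2 + W^2 * L < 9/5000"
    and W: "1 - p \<le> W"
  shows "p < 9/200"
proof (rule ccontr)
  assume "\<not> p < 9/200"
  hence p_big: "9/200 \<le> p" by simp
  define q where "q = (1 - p)^2"
  have q_bounds: "0 \<le> q" "(1/20)^2 \<le> q" "q \<le> (191/200)^2"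
    unfolding q_def using p p_big by (auto intro!: power_mono)
  have WL: "0 \<le> W^2 * L" using SL by simp
  have "q * L \<le> W^2 * L" unfolding q_def using W p SL by (intro mult_right_mono power_mono) auto
  hence qL: "q * L < 9/5000" using upper zero_le_power2[of S] by linarith
  have "S^2 < 9/5000" using upper WL by linarith
  hence "S^2 < (17/400)^2" by (simp add: power_divide)
  hence "S < 17/400" by (rule power_less_imp_less_base) simp
  moreover have "p * (2 - p) = 1 - q" unfolding q_def by (simp add: power2_eq_square algebra_simps)
  ultimately have L_big: "183/200 - q \<le> L" using lower by linarith
  have "q * (183/200 - q) \<le> q * L" using L_big q_bounds by (intro mult_left_mono) auto
  hence "183/200 * q - q * q < 9/5000" using qL by (simp add: algebra_simps)
  moreover have "0 \<le> (q - 1/400) * (36481/40000 - q)"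
    using q_bounds by (simp add: power2_eq_square)
  moreover have "(q - 1/400) * (36481/40000 - q) = 36581/40000 * q - q * q - 36481/16000000"
    by (simp add: field_simps)
  ultimately show False using q_bounds by linarith
qed

text \<open>In terms of t = tr A, D = disc A and k = scalar_dev A: a small idempotency defect with
  t near 2 forces t very near 2 and a very small traceless part.\<close>

lemma near_idempotent_trace_dev:
  fixes t D :: complex and k :: real
  assumes D: "cmod D \<le> 2 * k"
    and defect: "cmod ((t^2 - 2*t + D) / 2)^2 / 2 + cmod (t - 1)^2 * k < 9/10000"
    and trace: "cmod (t - 2) < 19/20"
  shows "cmod (t - 2) < 9/200 \<and> k < 1/1000"
proof -
  define s where "s = (t^2 - 2*t + D) / 2"
  define p where "p = cmod (t - 2)"
  define W where "W = cmod (t - 1)"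
  have k: "0 \<le> k" using D norm_ge_zero[of D] by linarith
  have W_big: "1 - p \<le> W"
    unfolding p_def W_def using norm_triangle_ineq2[of 1 "2 - t"] by (simp add: norm_minus_commute)
  have "p * (2 - p) \<le> p * cmod t"
    using norm_triangle_ineq2[of 2 "2 - t"] by (intro mult_left_mono) (auto simp: p_def norm_minus_commute)
  also have "\<dots> = cmod (2 * s - D)"
  proof -
    have "(t - 2) * t = 2 * s - D" unfolding s_def by (simp add: power2_eq_square algebra_simps)
    thus ?thesis unfolding p_def by (metis norm_mult)
  qed
  also have "\<dots> \<le> 2 * cmod s + cmod D" using norm_triangle_ineq4[of "2 * s" D] by simp
  finally have lower: "p * (2 - p) \<le> 2 * cmod s + cmod D" .
  have "W^2 * cmod D \<le> W^2 * (2 * k)" using D by (intro mult_left_mono) auto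
  hence upper: "(cmod s)^2 + W^2 * cmod D < 9/5000" using defect unfolding s_def W_def by simp
  have p_small: "p < 9/200"
    using trace_distance_small[OF _ _ _ _ lower upper W_big] trace by (simp add: p_def)
  have "(191/200)^2 * k \<le> W^2 * k"
    using W_big p_small k by (intro mult_right_mono power_mono) auto
  moreover have "0 \<le> cmod s^2 / 2" by simp
  ultimately have "(191/200)^2 * k < 9/10000" using defect unfolding s_def W_def by linarith
  hence "k < 1/1000" by (simp add: power2_eq_square)
  thus ?thesis using p_small unfolding p_def by blast
qed

text \<open>Consequently the matrix is within 1/20 of the identity (first conclusion, the squared
  norm of A - I) and its norm is less than 3/2 times its determinant (second conclusion).\<close>

lemma near_idempotent_scalar:
  fixes t D :: complex and k :: real
  assumes D: "cmod D \<le> 2 * k"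
    and defect: "cmod ((t^2 - 2*t + D) / 2)^2 / 2 + cmod (t - 1)^2 * k < 9/10000"
    and trace: "cmod (t - 2) < 19/20"
  shows "cmod (t - 2)^2 / 2 + k < 1/400 \<and> cmod t^2 / 2 + k < 9/4 * cmod ((t^2 - D) / 4)^2"
proof -
  from near_idempotent_trace_dev[OF D defect trace]
  have t_close: "cmod (t - 2) < 9/200" and k_small: "k < 1/1000" by blast+
  have "cmod (t - 2)^2 < (9/200)^2" using t_close by (simp add: power_strict_mono)
  hence first: "cmod (t - 2)^2 / 2 + k < 1/400" using k_small by (simp add: power_divide)
  define X where "X = cmod t^2 / 4"
  have "391/200 \<le> cmod t"
    using t_close norm_triangle_ineq2[of 2 "2 - t"] by (simp add: norm_minus_commute)
  hence "(391/200)^2 \<le> cmod t^2" by (rule power_mono) simp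
  hence X_big: "(391/400)^2 \<le> X" unfolding X_def by (simp add: power_divide)
  have "X \<le> cmod ((t^2 - D) / 4) + cmod D / 4"
    unfolding X_def using norm_triangle_ineq4[of "t^2 - D" "-D"]
    by (simp add: norm_divide norm_power)
  hence det_big: "X - 1/2000 \<le> cmod ((t^2 - D) / 4)" using D k_small by linarith
  define Y where "Y = X - 1/2000"
  have Y_big: "191/200 \<le> Y" using X_big unfolding Y_def by (simp add: power2_eq_square)
  have "(191/200) * Y \<le> Y * Y" using Y_big by (intro mult_right_mono) auto
  moreover have "Y * Y \<le> cmod ((t^2 - D) / 4)^2"
    using det_big Y_big unfolding Y_def power2_eq_square by (intro mult_mono) auto
  moreover have "cmod t^2 / 2 = 2 * Y + 1/1000" unfolding X_def Y_def by simp
  ultimately have "cmod t^2 / 2 + k < 9/4 * cmod ((t^2 - D) / 4)^2"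
    using k_small Y_big by linarith
  thus ?thesis using first by blast
qed

lemma near_idempotent_near_identity:
  fixes A :: cm
  assumes defect: "norm (A ** A - A) < 3/100" and trace: "cmod (mtrace A - 2) < 19/20"
  shows "invertible A \<and> norm (matrix_inv A) < 3/2 \<and> norm (A - mat 1) < 1/20"
proof -
  define t where "t = mtrace A"
  have "norm (A ** A - A)^2 < (3/100)^2" using defect by (intro power_strict_mono) auto
  moreover have "norm (A ** A - A)^2
      = cmod ((t^2 - 2*t + disc A) / 2)^2 / 2 + cmod (t - 1)^2 * scalar_dev A"
    unfolding norm_sq_trace_dev scalar_dev_idem_defect trace_idem_defect t_def ..
  ultimately have "cmod ((t^2 - 2*t + disc A) / 2)^2 / 2 + cmod (t - 1)^2 * scalar_dev A < 9/10000"
    by (simp add: power_divide)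
  from near_idempotent_scalar[OF disc_le_dev this] trace
  have close: "cmod (t - 2)^2 / 2 + scalar_dev A < 1/400"
    and bounded: "norm A^2 < 9/4 * cmod (det A)^2"
    unfolding t_def norm_sq_trace_dev det_trace_disc by auto
  have det: "det A \<noteq> 0" using bounded by auto
  have "norm (matrix_inv A)^2 = norm A^2 / cmod (det A)^2"
    using inverse_2x2[OF det] by (simp add: power_divide)
  also have "\<dots> < (3/2)^2" using bounded det by (simp add: divide_less_eq power2_eq_square)
  finally have "norm (matrix_inv A) < 3/2" by (rule power_less_imp_less_base) simp
  moreover have "norm (A - mat 1)^2 < (1/20)^2"
    using close unfolding norm_sq_trace_dev t_def by (simp add: power_divide)
  hence "norm (A - mat 1) < 1/20" by (rule power_less_imp_less_base) simp
  ultimately show ?thesis using inverse_2x2[OF det] by blast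
qed

text \<open>The same for trace near 0, via the complementary near-idempotent I - A.\<close>

lemma near_idempotent_near_zero:
  fixes A :: cm
  assumes defect: "norm (A ** A - A) < 3/100" and trace: "cmod (mtrace A) < 19/20"
  shows "invertible (mat 1 - A) \<and> norm (matrix_inv (mat 1 - A)) < 3/2 \<and> norm A < 1/20"
proof -
  have square: "(mat 1 - A) ** (mat 1 - A) - (mat 1 - A) = A ** A - A"
    by (simp add: matrix_diff_ldistrib matrix_diff_rdistrib)
  have trace_compl: "mtrace (mat 1 - A) - 2 = - mtrace A" unfolding mtrace_2x2 by simp
  show ?thesis
    using near_idempotent_near_identity[of "mat 1 - A", unfolded square trace_compl] defect trace
    by simp
qed

lemma product_near_identity_trace:
  fixes E F P :: cm
  assumes E: "norm (E - mat 1) < 1/20" and F: "norm (F - mat 1) < 1/20"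
    and P: "norm (E ** F - P) < 3/100"
  shows "cmod (mtrace P - 2) < 19/20"
proof -
  have "E ** F - mat 1 = (E - mat 1) ** (F - mat 1) + (E - mat 1) + (F - mat 1)"
    by (simp add: matrix_diff_ldistrib matrix_diff_rdistrib)
  hence "norm (E ** F - mat 1)
      \<le> norm (E - mat 1) * norm (F - mat 1) + norm (E - mat 1) + norm (F - mat 1)"
    by (metis norm_matrix_mult_le norm_triangle_le add_mono order_refl norm_triangle_ineq)
  also have "\<dots> < 1/20 * (1/20) + 1/20 + 1/20"
    using E F by (intro add_strict_mono mult_strict_mono) auto
  finally have "norm (E ** F - mat 1) < 41/400" by simp
  hence "norm (P - mat 1) < 53/400"
    using P norm_triangle_ineq[of "P - E ** F" "E ** F - mat 1"] by (simp add: norm_minus_commute)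
  thus ?thesis using trace_le_norm[of "P - mat 1"] by simp
qed

lemma absorbed_by_near_zero_trace:
  fixes E P :: cm
  assumes E: "norm E < 1/20" and P: "norm (E ** P - P) < 3/100"
  shows "cmod (mtrace P) < 19/20"
proof -
  have "norm P \<le> norm (E ** P) + norm (E ** P - P)"
    using norm_triangle_ineq4[of "E ** P" "E ** P - P"] by simp
  also have "\<dots> \<le> 1/20 * norm P + norm (E ** P - P)"
    using norm_matrix_mult_le[of E P] E by (smt (verit) mult_right_mono norm_ge_zero)
  finally have "norm P < 2/50" using P by linarith
  thus ?thesis using trace_le_norm[of P] by linarith
qed

lemma Sk_two_zero_disjoint: "x \<in> Sk \<theta> 2 \<Longrightarrow> x \<notin> Sk \<theta> 0"
  unfolding Sk_def using norm_triangle_ineq4[of "mtrace (\<theta> x)" "mtrace (\<theta> x) - 2"] by auto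

locale near_representation =
  fixes \<theta> :: "'a::ab_semigroup_mult \<Rightarrow> cm"
  assumes idem: "(x::'a) * x = x"
    and near_mult: "norm (\<theta> e ** \<theta> f - \<theta> (e * f)) < 3/100"
begin

lemma near_idem: "norm (\<theta> e ** \<theta> e - \<theta> e) < 3/100"
  using near_mult[of e e] idem[of e] by simp

text \<open>Since theta(f) is a near-idempotent for every f, the rigidity lemmas apply on S_2 and
  S_0; S_2 is closed under products because theta(e f) is close to theta(e) theta(f).\<close>

lemma Sk_two_near_identity:
  assumes "f \<in> Sk \<theta> 2"
  shows "invertible (\<theta> f) \<and> norm (matrix_inv (\<theta> f)) < 3/2 \<and> norm (\<theta> f - mat 1) < 1/20"
  using assms near_idempotent_near_identity[OF near_idem] unfolding Sk_def by simp

lemma Sk_zero_near_zero: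
  assumes "e \<in> Sk \<theta> 0"
  shows "invertible (mat 1 - \<theta> e) \<and> norm (matrix_inv (mat 1 - \<theta> e)) < 3/2 \<and> norm (\<theta> e) < 1/20"
  using assms near_idempotent_near_zero[OF near_idem] unfolding Sk_def by simp

lemma Sk_two_mult_closed:
  assumes "e \<in> Sk \<theta> 2" and "f \<in> Sk \<theta> 2"
  shows "e * f \<in> Sk \<theta> 2"
proof -
  have "cmod (mtrace (\<theta> (e * f)) - 2) < 19/20"
    using product_near_identity_trace near_mult Sk_two_near_identity assms by blast
  thus ?thesis unfolding Sk_def by simp
qed

text \<open>S_0 is an ideal: e (e f) = e f, so theta(e f) is nearly absorbed by theta(e), which is
  near 0.\<close>

lemma Sk_zero_ideal:
  assumes "e \<in> Sk \<theta> 0"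
  shows "e * f \<in> Sk \<theta> 0" and "f * e \<in> Sk \<theta> 0"
proof -
  have "e * (e * f) = e * f" by (simp add: mult.assoc[symmetric] idem)
  hence "norm (\<theta> e ** \<theta> (e * f) - \<theta> (e * f)) < 3/100" using near_mult[of e "e * f"] by simp
  hence "cmod (mtrace (\<theta> (e * f))) < 19/20"
    using absorbed_by_near_zero_trace Sk_zero_near_zero[OF assms] by blast
  thus "e * f \<in> Sk \<theta> 0" and "f * e \<in> Sk \<theta> 0" unfolding Sk_def by (simp_all add: mult.commute)
qed

end

theorem propositionp:
  fixes \<theta> :: "'a::ab_semigroup_mult \<Rightarrow> complex^2^2" and \<delta> :: real
  assumes idem: "\<And>x::'a. x * x = x"
    and delta_nonneg: "0 \<le> \<delta>" and delta_small: "\<delta> < 0.03"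
    and approx: "\<And>e f. hs_norm (\<theta> e ** \<theta> f - \<theta> (e * f)) \<le> \<delta>"
    and cover: "Sk \<theta> 0 \<union> Sk \<theta> 1 \<union> Sk \<theta> 2 = UNIV"
  shows "(\<forall>f\<in>Sk \<theta> 2. invertible (\<theta> f) \<and> hs_norm (matrix_inv (\<theta> f)) < 1.5)
    \<and> (\<forall>e\<in>Sk \<theta> 0. invertible (mat 1 - \<theta> e) \<and> hs_norm (matrix_inv (mat 1 - \<theta> e)) < 1.5)
    \<and> (\<forall>e\<in>Sk \<theta> 2. \<forall>f\<in>Sk \<theta> 2. e * f \<in> Sk \<theta> 2)
    \<and> (\<forall>e\<in>Sk \<theta> 0. \<forall>f. e * f \<in> Sk \<theta> 0)
    \<and> (\<forall>x\<in>Sk \<theta> 2 \<union> Sk \<theta> 0. \<forall>y\<in>Sk \<theta> 2 \<union> Sk \<theta> 0. x * y \<in> Sk \<theta> 2 \<union> Sk \<theta> 0)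
    \<and> (let \<phi> = (\<lambda>x. if x \<in> Sk \<theta> 2 then (mat 1 :: complex^2^2) else 0)
       in \<forall>x\<in>Sk \<theta> 2 \<union> Sk \<theta> 0. \<forall>y\<in>Sk \<theta> 2 \<union> Sk \<theta> 0. \<phi> (x * y) = \<phi> x ** \<phi> y)"
proof -
  interpret near_representation \<theta>
  proof
    show "x * x = x" for x :: 'a by (rule idem)
    show "norm (\<theta> e ** \<theta> f - \<theta> (e * f)) < 3/100" for e f
      using approx[of e f] delta_small unfolding hs_norm_eq_norm by simp
  qed
  have leaves_two: "x * y \<notin> Sk \<theta> 2" if "x \<in> Sk \<theta> 0 \<or> y \<in> Sk \<theta> 0" for x y
  proof -
    have "x * y \<in> Sk \<theta> 0" using that by (elim disjE) (simp_all add: Sk_zero_ideal)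
    thus ?thesis using Sk_two_zero_disjoint[of "x * y" \<theta>] by blast
  qed
  show ?thesis
    using Sk_two_near_identity Sk_zero_near_zero Sk_two_mult_closed Sk_zero_ideal leaves_two
    unfolding hs_norm_eq_norm Let_def by auto
qed

end
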